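(* Let $(\mathcal T,d)$ be a finite metric space with $d^\star=\max_{s,t\in\mathcal T}d(s,t)$, let $\ell:\mathbb R_+\to\mathbb R_+$ be non-decreasing, $L(s,t)=\ell(d(s,t))$, $f:\mathcal X^n\to\mathcal T$, $\varepsilon>0$, and $T\ge1$ an integer. Then for every $x\in\mathcal X^n$, the discrete inverse sensitivity mechanism $M_{\mathrm{disc}}$ with parameter $\varepsilon$ satisfies $$\mathbb E[L(M_{\mathrm{disc}}(x),f(x))]\le\ell(\omega_f(x;T))+\frac{2\ell(d^\star)|\mathcal T|}{\varepsilon}e^{-T\varepsilon/2}.$$
   Context: $d_H$ is the Hamming distance on $\mathcal X^n$. The inverse sensitivity is $\mathrm{len}_f(x;t)=\inf\{d_H(x,x'):f(x')=t\}$ ($\inf\emptyset=+\infty$, $e^{-\infty}=0$). The discrete inverse sensitivity mechanism with parameter $\varepsilon$ outputs $t\in\mathcal T$ with probability $e^{-\mathrm{len}_f(x;t)\varepsilon/2}\big/\sum_{s\in\mathcal T}e^{-\mathrm{len}_f(x;s)\varepsilon/2}$. The local modulus of continuity is $\omega_f(x;k)=\sup\{d(f(x),f(x')):x'\in\mathcal X^n,\ d_H(x,x')\le k\}$. *)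

theory Defs
  imports "HOL-Analysis.Analysis" "HOL-Library.Extended_Nat"
begin

text \<open>Data sets in X^n are lists of length n over the type 'x (X = UNIV).\<close>

definition hamming :: "'x list \<Rightarrow> 'x list \<Rightarrow> nat" where
  "hamming xs ys = card {i. i < length xs \<and> xs ! i \<noteq> ys ! i}"

definition finite_metric_on :: "'t set \<Rightarrow> ('t \<Rightarrow> 't \<Rightarrow> real) \<Rightarrow> bool" where
  "finite_metric_on T d \<longleftrightarrow> finite T \<and>
     (\<forall>s\<in>T. \<forall>t\<in>T. d s t \<ge> 0 \<and> (d s t = 0 \<longleftrightarrow> s = t) \<and> d s t = d t s) \<and>
     (\<forall>r\<in>T. \<forall>s\<in>T. \<forall>t\<in>T. d r t \<le> d r s + d s t)"

text \<open>Inverse sensitivity; the infimum over the empty set is \<infinity>.\<close>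
definition inv_sens :: "nat \<Rightarrow> ('x list \<Rightarrow> 't) \<Rightarrow> 'x list \<Rightarrow> 't \<Rightarrow> enat" where
  "inv_sens n f x t = (INF x'\<in>{x'. length x' = n \<and> f x' = t}. enat (hamming x x'))"

definition inv_weight :: "nat \<Rightarrow> ('x list \<Rightarrow> 't) \<Rightarrow> real \<Rightarrow> 'x list \<Rightarrow> 't \<Rightarrow> real" where
  "inv_weight n f eps x t =
     (case inv_sens n f x t of enat k \<Rightarrow> exp (- real k * eps / 2) | \<infinity> \<Rightarrow> 0)"

definition inv_sens_prob ::
  "'t set \<Rightarrow> nat \<Rightarrow> ('x list \<Rightarrow> 't) \<Rightarrow> real \<Rightarrow> 'x list \<Rightarrow> 't \<Rightarrow> real" where
  "inv_sens_prob T n f eps x t =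
     inv_weight n f eps x t / (\<Sum>s\<in>T. inv_weight n f eps x s)"

definition modulus :: "('t \<Rightarrow> 't \<Rightarrow> real) \<Rightarrow> nat \<Rightarrow> ('x list \<Rightarrow> 't) \<Rightarrow> 'x list \<Rightarrow> nat \<Rightarrow> real" where
  "modulus d n f x k =
     (SUP x'\<in>{x'. length x' = n \<and> hamming x x' \<le> k}. d (f x) (f x'))"

definition diam :: "'t set \<Rightarrow> ('t \<Rightarrow> 't \<Rightarrow> real) \<Rightarrow> real" where
  "diam T d = Max {d s t | s t. s \<in> T \<and> t \<in> T}"

end

theory Submission
  imports Defs
begin

text \<open>Split the outputs t into those within inverse sensitivity K of x and the rest. An output of
  the first kind comes from some x' with d_H(x, x') \<le> K, so its loss is at most
  \<ell>(\<omega>_f(x; K)). An output of the second kind has unnormalised weight at most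
  e^{-(K+1)\<epsilon>/2} \<le> (2/\<epsilon>) e^{-K\<epsilon>/2} and loss at most \<ell>(d*). Since f(x) itself has
  weight 1, the normaliser is at least 1, and summing over the |T| outputs gives the bound.\<close>

lemma hamming_self [simp]: "hamming x x = 0"
  by (simp add: hamming_def)

lemma inv_sens_attained:
  assumes "inv_sens n f x t = enat k"
  obtains x' where "length x' = n" "f x' = t" "hamming x x' = k"
proof -
  let ?S = "(\<lambda>x'. enat (hamming x x')) ` {x'. length x' = n \<and> f x' = t}"
  have "?S \<noteq> {}"
    using assms unfolding inv_sens_def by (auto simp: Inf_enat_def split: if_splits)
  then have "Inf ?S \<in> ?S"
    unfolding Inf_enat_def by (auto intro: LeastI)
  then have "enat k \<in> ?S"
    using assms unfolding inv_sens_def by simp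
  then show ?thesis
    using that by auto
qed

lemma inv_sens_self:
  assumes "length x = n"
  shows "inv_sens n f x (f x) = 0"
proof -
  have "inv_sens n f x (f x) \<le> enat (hamming x x)"
    unfolding inv_sens_def using assms by (intro INF_lower) auto
  then show ?thesis
    by (simp add: zero_enat_def[symmetric])
qed

lemma inv_weight_nonneg: "inv_weight n f eps x t \<ge> 0"
  by (auto simp: inv_weight_def split: enat.splits)

lemma inv_weight_self:
  assumes "length x = n"
  shows "inv_weight n f eps x (f x) = 1"
  by (simp add: inv_weight_def inv_sens_self[OF assms] zero_enat_def)

lemma inv_weight_small_or_close:
  assumes "eps \<ge> 0"
  shows "inv_weight n f eps x t \<le> exp (- real (Suc K) * eps / 2)
         \<or> (\<exists>x'. length x' = n \<and> f x' = t \<and> hamming x x' \<le> K)"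
proof (cases "inv_sens n f x t")
  case (enat k)
  show ?thesis
  proof (cases "k \<le> K")
    case True
    then show ?thesis
      using inv_sens_attained[OF enat] by metis
  next
    case False
    then have "real (Suc K) * eps \<le> real k * eps"
      using assms by (intro mult_right_mono) auto
    then have "- real k * eps / 2 \<le> - real (Suc K) * eps / 2"
      by linarith
    then show ?thesis
      using enat by (simp add: inv_weight_def)
  qed
next
  case infinity
  then show ?thesis
    by (simp add: inv_weight_def)
qed

lemma modulus_upper:
  assumes "finite T" and "\<forall>x'. length x' = n \<longrightarrow> f x' \<in> T"
    and "length x' = n" and "hamming x x' \<le> k"
  shows "d (f x) (f x') \<le> modulus d n f x k"
proof -
  have "(\<lambda>x'. d (f x) (f x')) ` {x'. length x' = n \<and> hamming x x' \<le> k} \<subseteq> d (f x) ` T"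
    using assms(2) by auto
  then have "bdd_above ((\<lambda>x'. d (f x) (f x')) ` {x'. length x' = n \<and> hamming x x' \<le> k})"
    using assms(1) by (meson bdd_above_mono finite_imageI bdd_above_finite)
  then show ?thesis
    unfolding modulus_def using assms(3,4) by (auto intro: cSUP_upper)
qed

lemma dist_le_diam:
  assumes "finite T" and "s \<in> T" and "t \<in> T"
  shows "d s t \<le> diam T d"
proof -
  have "{d s t | s t. s \<in> T \<and> t \<in> T} = (\<lambda>(s, t). d s t) ` (T \<times> T)"
    by auto
  then show ?thesis
    unfolding diam_def using assms by (auto intro: Max_ge)
qed

lemma exp_neg_le_inverse:
  fixes x :: real
  assumes "x > 0"
  shows "exp (- x) \<le> 1 / x"
proof -
  have "x \<le> exp x"
    using exp_ge_add_one_self[of x] by linarith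
  then show ?thesis
    using assms by (simp add: exp_minus field_simps)
qed

lemma exp_neg_Suc_half_le:
  assumes "eps > 0"
  shows "exp (- real (Suc K) * eps / 2) \<le> 2 / eps * exp (- real K * eps / 2)"
proof -
  have "exp (- real (Suc K) * eps / 2) = exp (- real K * eps / 2) * exp (- (eps / 2))"
    by (simp add: mult_exp_exp field_simps)
  also have "\<dots> \<le> exp (- real K * eps / 2) * (2 / eps)"
    using exp_neg_le_inverse[of "eps / 2"] assms by (intro mult_left_mono) auto
  finally show ?thesis
    by (simp add: mult.commute)
qed

lemma modulus_nonneg:
  assumes "finite_metric_on T d" and "\<forall>x'. length x' = n \<longrightarrow> f x' \<in> T" and "length x = n"
  shows "modulus d n f x k \<ge> 0"
proof -
  have "finite T" and "d (f x) (f x) = 0"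
    using assms unfolding finite_metric_on_def by auto
  then show ?thesis
    using modulus_upper[of T n f x x k d] assms(2,3) by simp
qed

lemma diam_nonneg:
  assumes "finite_metric_on T d" and "s \<in> T"
  shows "diam T d \<ge> 0"
proof -
  have "finite T" and "d s s = 0"
    using assms unfolding finite_metric_on_def by auto
  then show ?thesis
    using dist_le_diam[of T s s d] assms(2) by simp
qed

lemma inv_weight_loss_le:
  assumes "finite_metric_on T d" and "mono_on {0..} ell" and "\<forall>r\<ge>0. ell r \<ge> 0"
    and "\<forall>x'. length x' = n \<longrightarrow> f x' \<in> T" and "eps \<ge> 0" and "length x = n" and "t \<in> T"
  shows "inv_weight n f eps x t * ell (d t (f x))
         \<le> inv_weight n f eps x t * ell (modulus d n f x K)
            + exp (- real (Suc K) * eps / 2) * ell (diam T d)"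
proof -
  let ?w = "inv_weight n f eps x t"
  have fin: "finite T" and d_nonneg: "d t (f x) \<ge> 0" and d_sym: "d t (f x) = d (f x) t"
    using assms(1,4,6,7) unfolding finite_metric_on_def by auto
  have ell_mono: "ell r \<le> ell r'" if "0 \<le> r" "r \<le> r'" for r r'
    using assms(2) that by (auto intro: mono_onD)
  have ell_M: "ell (modulus d n f x K) \<ge> 0"
    using assms(3) modulus_nonneg[OF assms(1,4,6)] by simp
  have "d t (f x) \<le> diam T d"
    using dist_le_diam[OF fin assms(7)] assms(4,6) by simp
  then have ell_D: "ell (d t (f x)) \<le> ell (diam T d)"
    using ell_mono d_nonneg by simp
  show ?thesis
    using inv_weight_small_or_close[OF assms(5), of n f x t K]
  proof (elim disjE exE conjE)
    assume "?w \<le> exp (- real (Suc K) * eps / 2)"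
    then have "?w * ell (d t (f x)) \<le> exp (- real (Suc K) * eps / 2) * ell (diam T d)"
      using ell_D assms(3) d_nonneg inv_weight_nonneg by (intro mult_mono) auto
    then show ?thesis
      using inv_weight_nonneg[of n f eps x t] ell_M by (smt (verit) mult_nonneg_nonneg)
  next
    fix x' assume "length x' = n" "f x' = t" "hamming x x' \<le> K"
    then have "d t (f x) \<le> modulus d n f x K"
      using modulus_upper[OF fin assms(4)] d_sym by auto
    then have "ell (d t (f x)) \<le> ell (modulus d n f x K)"
      using ell_mono d_nonneg by simp
    then have "?w * ell (d t (f x)) \<le> ?w * ell (modulus d n f x K)"
      by (rule mult_left_mono) (rule inv_weight_nonneg)
    moreover have "ell (diam T d) \<ge> 0"
      using ell_D assms(3) d_nonneg by force
    ultimately show ?thesis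
      by (simp add: add_increasing2)
  qed
qed

lemma weighted_average_le:
  fixes w g :: "'a \<Rightarrow> real"
  assumes "finite T" and "\<And>t. t \<in> T \<Longrightarrow> w t \<ge> 0" and "(\<Sum>t\<in>T. w t) \<ge> 1"
    and "a \<ge> 0" and "b \<ge> 0"
    and "\<And>t. t \<in> T \<Longrightarrow> w t * g t \<le> w t * a + b"
  shows "(\<Sum>t\<in>T. w t * g t) / (\<Sum>t\<in>T. w t) \<le> a + real (card T) * b"
proof -
  let ?Z = "\<Sum>t\<in>T. w t"
  have "(\<Sum>t\<in>T. w t * g t) \<le> (\<Sum>t\<in>T. w t * a + b)"
    using assms(6) by (rule sum_mono)
  also have "\<dots> = ?Z * a + real (card T) * b"
    by (simp add: sum.distrib sum_distrib_right)
  also have "\<dots> \<le> ?Z * a + ?Z * (real (card T) * b)"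
    using assms(3,5) mult_right_mono[of 1 ?Z "real (card T) * b"] by simp
  also have "\<dots> = ?Z * (a + real (card T) * b)"
    by (simp add: distrib_left)
  finally show ?thesis
    using assms(3) by (simp add: divide_le_eq mult.commute)
qed

theorem lemmaB1:
  fixes T :: "'t set" and d :: "'t \<Rightarrow> 't \<Rightarrow> real"
    and ell :: "real \<Rightarrow> real" and f :: "'x list \<Rightarrow> 't"
    and n :: nat and eps :: real and K :: nat and x :: "'x list"
  assumes "finite_metric_on T d"
    and "mono_on {0..} ell" and "\<forall>r\<ge>0. ell r \<ge> 0"
    and "\<forall>x'. length x' = n \<longrightarrow> f x' \<in> T"
    and "eps > 0" and "K \<ge> 1"
    and "length x = n"
  shows "(\<Sum>t\<in>T. inv_sens_prob T n f eps x t * ell (d t (f x)))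
           \<le> ell (modulus d n f x K)
              + 2 * ell (diam T d) * real (card T) / eps * exp (- real K * eps / 2)"
proof -
  let ?w = "inv_weight n f eps x"
  let ?D = "ell (diam T d)"
  have fin: "finite T" and fx: "f x \<in> T"
    using assms(1,4,7) unfolding finite_metric_on_def by auto
  have ell_D: "?D \<ge> 0"
    using assms(3) diam_nonneg[OF assms(1) fx] by blast
  have "(\<Sum>t\<in>T. ?w t) \<ge> 1"
    using member_le_sum[of "f x" T ?w] fx fin
    by (simp add: inv_weight_nonneg inv_weight_self[OF assms(7)])
  moreover have "?w t * ell (d t (f x))
        \<le> ?w t * ell (modulus d n f x K) + exp (- real (Suc K) * eps / 2) * ?D" if "t \<in> T" for t
    using inv_weight_loss_le[OF assms(1-4) _ assms(7) that] assms(5) by simp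
  ultimately have "(\<Sum>t\<in>T. ?w t * ell (d t (f x))) / (\<Sum>t\<in>T. ?w t)
        \<le> ell (modulus d n f x K) + real (card T) * (exp (- real (Suc K) * eps / 2) * ?D)"
    using fin assms(3) ell_D modulus_nonneg[OF assms(1,4,7)]
    by (intro weighted_average_le) (auto simp: inv_weight_nonneg)
  then have "(\<Sum>t\<in>T. inv_sens_prob T n f eps x t * ell (d t (f x)))
        \<le> ell (modulus d n f x K) + real (card T) * (exp (- real (Suc K) * eps / 2) * ?D)"
    by (simp add: inv_sens_prob_def sum_divide_distrib)
  also have "\<dots> \<le> ell (modulus d n f x K) + real (card T) * (2 / eps * exp (- real K * eps / 2) * ?D)"
    using exp_neg_Suc_half_le[OF assms(5)] ell_D
    by (intro add_left_mono mult_left_mono mult_right_mono) auto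
  finally show ?thesis
    by (simp add: field_simps)
qed

end
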